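(* There exist finite alphabets $\Sigma,\Gamma$, a tier $\tau$ on $\Sigma\times\Gamma^*$ and an SFST $T$ with input alphabet $\Sigma$ and output alphabet $\Gamma$ that is $2$-TSSL on tier $\tau$, such that the function $f$ computed by $T$ is not $k$-TSSL on tier $\upsilon$ for any $k>0$ and any tier $\upsilon$ on $\Sigma\times\Gamma^*$.
   Context: Strings: $\lambda$ is the empty string; $\rtimes$ is a boundary symbol not in any alphabet. For $m\ge0$, $\mathrm{suff}^m(x)$ is the string of the last $m$ symbols of $\rtimes^mx$. $\mathrm{lcp}(A)$ is the longest common prefix of a set of strings $A$. An SFST is $T=\langle Q,\Sigma,\Gamma,q_0,\to,\sigma\rangle$ with finite state set $Q$, start state $q_0$, transition function $\to:Q\times\Sigma\to Q\times\Gamma^*$ and final output function $\sigma:Q\to\Gamma^*$. Write $q\xrightarrow{a:y}r$ if $\to(q,a)=\langle r,y\rangle$, extended to strings by $q\xrightarrow{\lambda:\lambda}q$ and composition (concatenating outputs). $T$ computes $f$ if $f(x)=y\sigma(q)$ whenever $q_0\xrightarrow{x:y}q$. (No onwardness is required of $T$.) A tier on a (possibly infinite) alphabet $A$ is a homomorphism $\tau:A^*\to A^*$ with $\tau(a)\in\{a,\lambda\}$ for each $a\in A$; it is extended to $\rtimes$ by $\tau(\rtimes)=\rtimes$. Actions of an SFST $T$: $\mathbb{A}_T:=\{\langle x,y\rangle\mid\exists q\,\exists r.\ \to(q,x)=\langle r,y\rangle\}$, written $x:y$. $T$ is $k$-TSSL on a tier $\tau$ on $\Sigma\times\Gamma^*$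 if $Q=(\{\rtimes\}\cup\mathbb{A}_T)^{k-1}$, $q_0=\rtimes^{k-1}$, and for every $q\in Q$, if $\to(q,x)=\langle r,y\rangle$ then $r=\mathrm{suff}^{k-1}(\tau(q(x:y)))$. For $f:\Sigma^*\to\Gamma^*$: $f^{\gets}(x):=\mathrm{lcp}(\{f(xy)\mid y\in\Sigma^*\})$; $f^{\to}_x$ is defined by $f(xy)=f^{\gets}(x)f^{\to}_x(y)$. Actions of $f$: $\mathbb{A}_f:=\{\langle x,y\rangle\in\Sigma\times\Gamma^*\mid\exists z.\ f^{\gets}(zx)=f^{\gets}(z)y\}$. Run $f^{\Leftarrow}(x)$: if $|x|\le1$, $f^{\Leftarrow}(x):=x:f^{\gets}(x)$; if $x=yz$ with $|y|\ge1$, $|z|=1$, $f^{\Leftarrow}(x):=f^{\Leftarrow}(y)(z:w)$ where $f^{\gets}(x)=f^{\gets}(y)w$. The function $f$ is $k$-TSSL on a tier $\upsilon$ on $\Sigma\times\Gamma^*$ if for all $x,y\in\Sigma^*$, $\mathrm{suff}^{k-1}(\upsilon(f^{\Leftarrow}(x)))=\mathrm{suff}^{k-1}(\upsilon(f^{\Leftarrow}(y)))$ implies $f^{\to}_x=f^{\to}_y$. *)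

theory Defs
  imports Main "HOL-Library.Sublist"
begin

text \<open>An action x:y is a pair (x, y) :: nat \<times> nat list.  Strings over
  the tier alphabet extended with the boundary symbol are lists of
  (nat \<times> nat list) option, where None is the boundary symbol.\<close>

type_synonym action = "nat \<times> nat list"
type_synonym bsym = "action option"

definition strings :: "nat set \<Rightarrow> nat list set" where
  "strings S = {x. set x \<subseteq> S}"

definition suff :: "nat \<Rightarrow> bsym list \<Rightarrow> bsym list" where
  "suff m x = drop (length x) (replicate m None @ x)"

text \<open>A tier on the alphabet of actions is given by the set (predicate) of
  symbols it keeps; the boundary symbol is always kept.\<close>
definition tier :: "(action \<Rightarrow> bool) \<Rightarrow> bsym list \<Rightarrow> bsym list" where
  "tier keep xs = filter (\<lambda>s. case s of None \<Rightarrow> True | Some a \<Rightarrow> keep a) xs"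

definition lcp :: "'a list set \<Rightarrow> 'a list" where
  "lcp A = (THE w. (\<forall>v\<in>A. prefix w v) \<and> (\<forall>u. (\<forall>v\<in>A. prefix u v) \<longrightarrow> prefix u w))"

record 'q sfst =
  states :: "'q set"
  inp    :: "nat set"
  outp   :: "nat set"
  init   :: 'q
  trans  :: "'q \<Rightarrow> nat \<Rightarrow> 'q \<times> nat list"
  final  :: "'q \<Rightarrow> nat list"

definition is_sfst :: "'q sfst \<Rightarrow> bool" where
  "is_sfst T \<longleftrightarrow> finite (states T) \<and> init T \<in> states T \<and>
     (\<forall>q\<in>states T. \<forall>a\<in>inp T. fst (trans T q a) \<in> states T \<and> set (snd (trans T q a)) \<subseteq> outp T) \<and>
     (\<forall>q\<in>states T. set (final T q) \<subseteq> outp T)"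

fun sfst_run :: "'q sfst \<Rightarrow> 'q \<Rightarrow> nat list \<Rightarrow> 'q \<times> nat list" where
  "sfst_run T q [] = (q, [])"
| "sfst_run T q (a # x) =
     (let (r, y) = trans T q a; (s, z) = sfst_run T r x in (s, y @ z))"

definition sfst_fun :: "'q sfst \<Rightarrow> nat list \<Rightarrow> nat list" where
  "sfst_fun T x = (let (q, y) = sfst_run T (init T) x in y @ final T q)"

definition sfst_actions :: "'q sfst \<Rightarrow> action set" where
  "sfst_actions T = {(a, y). \<exists>q\<in>states T. \<exists>r. a \<in> inp T \<and> trans T q a = (r, y)}"

definition sfst_TSSL :: "nat \<Rightarrow> (action \<Rightarrow> bool) \<Rightarrow> bsym list sfst \<Rightarrow> bool" where
  "sfst_TSSL k keep T \<longleftrightarrow>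
     states T = {q. length q = k - 1 \<and> set q \<subseteq> insert None (Some ` sfst_actions T)} \<and>
     init T = replicate (k - 1) None \<and>
     (\<forall>q\<in>states T. \<forall>a\<in>inp T. \<forall>r y. trans T q a = (r, y) \<longrightarrow>
         r = suff (k - 1) (tier keep (q @ [Some (a, y)])))"

definition fpre :: "nat set \<Rightarrow> (nat list \<Rightarrow> nat list) \<Rightarrow> nat list \<Rightarrow> nat list" where
  "fpre S f x = lcp {f (x @ y) | y. y \<in> strings S}"

definition fpost :: "nat set \<Rightarrow> (nat list \<Rightarrow> nat list) \<Rightarrow> nat list \<Rightarrow> nat list \<Rightarrow> nat list" where
  "fpost S f x y = drop (length (fpre S f x)) (f (x @ y))"

definition frun :: "nat set \<Rightarrow> (nat list \<Rightarrow> nat list) \<Rightarrow> nat list \<Rightarrow> action list" where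
  "frun S f x = map (\<lambda>i. if i = 0 then (x ! 0, fpre S f (take 1 x))
        else (x ! i, drop (length (fpre S f (take i x))) (fpre S f (take (Suc i) x))))
      [0..<length x]"

definition fun_TSSL :: "nat set \<Rightarrow> nat \<Rightarrow> (action \<Rightarrow> bool) \<Rightarrow> (nat list \<Rightarrow> nat list) \<Rightarrow> bool" where
  "fun_TSSL S k keep f \<longleftrightarrow>
     (\<forall>x\<in>strings S. \<forall>y\<in>strings S.
        suff (k - 1) (tier keep (map Some (frun S f x))) = suff (k - 1) (tier keep (map Some (frun S f y)))
        \<longrightarrow> (\<forall>z\<in>strings S. fpost S f x z = fpost S f y z))"

end

theory Submission
  imports Defs
begin

text \<open>The transducer reads the unary input 0^n, alternately emitting nothing and 11, and
  finishes with a final output that depends on the parity of n, so it computes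
  0^n \<mapsto> 1^n 2 for even n and 0^n \<mapsto> 1^n 3 for odd n.  Its own actions 0:\<lambda> and 0:11
  record the parity, so it is 2-TSSL on the full tier.  The computed function, however,
  is onward: its canonical run on 0^n is (0:1)^n, so on any tier every run becomes a
  constant word, and the suffixes of length k-1 of the runs on 0^n and 0^(n+1) agree
  once n \<ge> k - 1, while the tails after these two inputs differ in the parity marker.\<close>

lemma lcp_eqI:
  assumes "\<And>v. v \<in> A \<Longrightarrow> prefix w v"
    and "\<And>u. (\<And>v. v \<in> A \<Longrightarrow> prefix u v) \<Longrightarrow> prefix u w"
  shows "lcp A = w"
  unfolding lcp_def
  using assms by (intro the_equality) (auto intro: prefix_order.antisym)

lemma lcp_eq_branch_point:
  assumes "\<And>v. v \<in> A \<Longrightarrow> prefix w v"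
    and "w @ c # u \<in> A" and "w @ d # u' \<in> A" and "c \<noteq> d"
  shows "lcp A = w"
proof (rule lcp_eqI)
  fix p assume "\<And>v. v \<in> A \<Longrightarrow> prefix p v"
  then have "prefix p (w @ c # u)" "prefix p (w @ d # u')"
    using assms(2,3) by blast+
  then show "prefix p w"
    using \<open>c \<noteq> d\<close> by (auto simp: prefix_append prefix_Cons)
qed (use assms(1) in blast)

lemma strings_singleton: "strings {a} = range (\<lambda>n. replicate n a)"
  unfolding strings_def
proof (intro set_eqI iffI)
  fix x assume "x \<in> {x. set x \<subseteq> {a}}"
  then have "x = replicate (length x) a" by (intro replicate_eqI) auto
  then show "x \<in> range (\<lambda>n. replicate n a)" by (rule range_eqI)
qed auto

lemma suff_replicate: "m \<le> n \<Longrightarrow> suff m (replicate n s) = replicate m s"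
  by (simp add: suff_def)

lemma tier_replicate:
  "tier keep (replicate n s) = (if case_option True keep s then replicate n s else [])"
  unfolding tier_def by (induction n) auto

lemma sfst_run_snoc:
  "sfst_run T q (xs @ [a]) =
     (let (r, y) = sfst_run T q xs; (s, z) = trans T r a in (s, y @ z))"
  by (induction xs arbitrary: q) (auto split: prod.splits)

context
  fixes f :: "nat list \<Rightarrow> nat list" and a b :: nat and c :: "nat \<Rightarrow> nat"
  assumes f_replicate: "\<And>n. f (replicate n a) = replicate n b @ [c n]"
    and marker_neq: "\<And>n. c n \<noteq> b"
begin

lemma fpre_replicate: "fpre {a} f (replicate n a) = replicate n b"
proof -
  have "f (replicate n a @ replicate m a) = replicate (n + m) b @ [c (n + m)]" for m
    by (simp add: f_replicate flip: replicate_add)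
  then have outputs: "{f (replicate n a @ y) | y. y \<in> strings {a}} =
      range (\<lambda>m. replicate (n + m) b @ [c (n + m)])"
    by (auto simp: strings_singleton) (metis rangeI)
  show ?thesis
    unfolding fpre_def outputs
  proof (rule lcp_eq_branch_point)
    show "replicate n b @ [c n] \<in> range (\<lambda>m. replicate (n + m) b @ [c (n + m)])"
      by (rule range_eqI[of _ _ 0]) simp
    show "replicate n b @ [b, c (Suc n)] \<in> range (\<lambda>m. replicate (n + m) b @ [c (n + m)])"
      by (rule range_eqI[of _ _ 1]) (simp add: replicate_append_same[symmetric])
  qed (auto simp: replicate_add marker_neq)
qed

lemma fpre_take_replicate: "fpre {a} f (take m (replicate n a)) = replicate (min m n) b"
  by (simp only: take_replicate fpre_replicate)

lemma frun_replicate: "frun {a} f (replicate n a) = replicate n (a, [b])"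
  unfolding frun_def
  by (rule nth_equalityI) (auto simp: fpre_take_replicate min_def replicate_append_same[symmetric]
      simp del: take_replicate)

lemma fpost_replicate_Nil: "fpost {a} f (replicate n a) [] = [c n]"
  by (simp add: fpost_def fpre_replicate f_replicate)

lemma not_fun_TSSL_if_marker_not_eventually_constant:
  assumes "\<And>m. \<exists>n\<ge>m. c (Suc n) \<noteq> c n"
  shows "\<not> fun_TSSL {a} k \<upsilon> f"
proof
  assume tssl: "fun_TSSL {a} k \<upsilon> f"
  obtain n where "k - 1 \<le> n" and "c (Suc n) \<noteq> c n"
    using assms by blast
  have tier_suffix: "suff (k - 1) (tier \<upsilon> (map Some (frun {a} f (replicate m a)))) =
      (if \<upsilon> (a, [b]) then replicate (k - 1) (Some (a, [b])) else suff (k - 1) [])"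
    if "k - 1 \<le> m" for m
    using that by (simp add: frun_replicate tier_replicate suff_replicate)
  have "suff (k - 1) (tier \<upsilon> (map Some (frun {a} f (replicate n a)))) =
        suff (k - 1) (tier \<upsilon> (map Some (frun {a} f (replicate (Suc n) a))))"
    using \<open>k - 1 \<le> n\<close> by (simp only: tier_suffix le_SucI)
  moreover have strings: "replicate m a \<in> strings {a}" for m
    by (simp add: strings_singleton)
  ultimately have "fpost {a} f (replicate n a) [] = fpost {a} f (replicate (Suc n) a) []"
    using tssl strings unfolding fun_TSSL_def by (metis replicate_0)
  with \<open>c (Suc n) \<noteq> c n\<close> show False
    by (simp add: fpost_replicate_Nil del: replicate_Suc)
qed

end

text \<open>After an odd number of steps one 1 is still withheld; the final output [1, 3]
  releases it.\<close>
definition parity_sfst :: "bsym list sfst" where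
  "parity_sfst =
     \<lparr>states = {[None], [Some (0, [])], [Some (0, [1, 1])]}, inp = {0}, outp = {1, 2, 3},
      init = [None],
      trans = (\<lambda>q _. if q = [Some (0, [])] then ([Some (0, [1, 1])], [1, 1])
                     else ([Some (0, [])], [])),
      final = (\<lambda>q. if q = [Some (0, [])] then [1, 3] else [2])\<rparr>"

lemma is_sfst_parity_sfst: "is_sfst parity_sfst"
  by (simp add: is_sfst_def parity_sfst_def)

lemma sfst_actions_parity_sfst: "sfst_actions parity_sfst = {(0, []), (0, [1, 1])}"
  by (auto simp: sfst_actions_def parity_sfst_def)

lemma sfst_TSSL_parity_sfst: "sfst_TSSL 2 (\<lambda>_. True) parity_sfst"
proof -
  have states: "{q. length q = 2 - 1 \<and> set q \<subseteq> insert None (Some ` {(0, []), (0, [1, 1])})} =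
      {[None], [Some (0, [])], [Some (0, [1, 1])]}"
    by (auto simp: length_Suc_conv)
  show ?thesis
    unfolding sfst_TSSL_def sfst_actions_parity_sfst states
    by (auto simp: parity_sfst_def suff_def tier_def)
qed

lemma sfst_run_parity_sfst:
  "sfst_run parity_sfst [None] (replicate n 0) =
     (if n = 0 then ([None], [])
      else if odd n then ([Some (0, [])], replicate (n - 1) 1)
      else ([Some (0, [1, 1])], replicate n 1))"
proof (induction n)
  case (Suc n)
  have "replicate (Suc n) (0::nat) = replicate n 0 @ [0]"
    by (simp add: replicate_append_same)
  then have "sfst_run parity_sfst [None] (replicate (Suc n) 0) =
      (let (r, y) = sfst_run parity_sfst [None] (replicate n 0); (s, z) = trans parity_sfst r 0
       in (s, y @ z))"
    by (simp only: sfst_run_snoc)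
  with Suc.IH show ?case
    by (cases n) (auto simp: parity_sfst_def replicate_append_same[symmetric])
qed simp

lemma sfst_fun_parity_sfst:
  "sfst_fun parity_sfst (replicate n 0) = replicate n 1 @ [if even n then 2 else 3]"
proof -
  have init: "init parity_sfst = [None]"
    by (simp add: parity_sfst_def)
  show ?thesis
    unfolding sfst_fun_def init sfst_run_parity_sfst
    by (cases n) (auto simp: parity_sfst_def replicate_append_same[symmetric])
qed

theorem proposition19:
  shows "\<exists>(\<Sigma>::nat set) (\<Gamma>::nat set) (\<tau>::action \<Rightarrow> bool) (T::bsym list sfst).
     finite \<Sigma> \<and> finite \<Gamma> \<and> is_sfst T \<and> inp T = \<Sigma> \<and> outp T = \<Gamma> \<and>
     sfst_TSSL 2 \<tau> T \<and>
     (\<forall>k>0. \<forall>\<upsilon>::action \<Rightarrow> bool. \<not> fun_TSSL \<Sigma> k \<upsilon> (sfst_fun T))"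
proof (intro exI conjI allI impI)
  show "is_sfst parity_sfst" "sfst_TSSL 2 (\<lambda>_. True) parity_sfst"
    by (fact is_sfst_parity_sfst sfst_TSSL_parity_sfst)+
  show "inp parity_sfst = {0}" "outp parity_sfst = {1, 2, 3}"
    by (simp_all add: parity_sfst_def)
  fix k \<upsilon>
  show "\<not> fun_TSSL {0} k \<upsilon> (sfst_fun parity_sfst)"
    using sfst_fun_parity_sfst
    by (rule not_fun_TSSL_if_marker_not_eventually_constant) auto
qed simp_all

end
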